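(* For every natural number $n\ge1$, $bell(n)=bell_+(n)$.
   Context: $\Re_{n+1}$ denotes the real $(n+1)\times(n+1)$ matrices with indices $0\le i,j\le n$. $bell(n)$ is the set of all $(p_{ij})\in\Re_{n+1}$ such that $p_{00}=1$ and there exist a finite-dimensional Hilbert space $H$, projections $E_1,\dots,E_n,F_1,\dots,F_n$ on $H$, and a density operator $W$ on $H\otimes H$ with $p_{i0}=\mathrm{tr}[W(E_i\otimes I)]$, $p_{0j}=\mathrm{tr}[W(I\otimes F_j)]$, $p_{ij}=\mathrm{tr}[W(E_i\otimes F_j)]$ for $i,j=1,\dots,n$. $bell_+(n)$ is the set of all $(q_{ij})\in\Re_{n+1}$ such that there exist a finite-dimensional Hilbert space $H$, positive semidefinite operators $A_0=I,A_1,\dots,A_n$ and $B_0=I,B_1,\dots,B_n$ on $H$ whose spectra are contained in $[0,1]$, and a density operator $W$ on $H\otimes H$ with $q_{ij}=\mathrm{tr}[W(A_i\otimes B_j)]$ for all $i,j=0,1,\dots,n$. *)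

theory Defs
  imports "Jordan_Normal_Form.Jordan_Normal_Form"
begin

text \<open>A finite-dimensional (complex) Hilbert space H is modelled as C^d for some d;
  operators on H are d x d complex matrices; H \<otimes> H is C^(d*d) and the tensor
  product of operators is the Kronecker product.\<close>

definition mtrace :: "complex mat \<Rightarrow> complex" where
  "mtrace A = (\<Sum>i<dim_row A. A $$ (i, i))"

definition adj :: "complex mat \<Rightarrow> complex mat" where
  "adj A = mat (dim_col A) (dim_row A) (\<lambda>(i, j). cnj (A $$ (j, i)))"

definition kron :: "complex mat \<Rightarrow> complex mat \<Rightarrow> complex mat" where
  "kron A B = mat (dim_row A * dim_row B) (dim_col A * dim_col B)
     (\<lambda>(i, j). A $$ (i div dim_row B, j div dim_col B) * B $$ (i mod dim_row B, j mod dim_col B))"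

definition cinner :: "complex vec \<Rightarrow> complex vec \<Rightarrow> complex" where
  "cinner v w = (\<Sum>i<dim_vec v. cnj (v $ i) * w $ i)"

definition hermitian :: "nat \<Rightarrow> complex mat \<Rightarrow> bool" where
  "hermitian d A \<longleftrightarrow> A \<in> carrier_mat d d \<and> adj A = A"

definition projection :: "nat \<Rightarrow> complex mat \<Rightarrow> bool" where
  "projection d P \<longleftrightarrow> hermitian d P \<and> P * P = P"

definition psd :: "nat \<Rightarrow> complex mat \<Rightarrow> bool" where
  "psd d A \<longleftrightarrow> hermitian d A \<and>
     (\<forall>v \<in> carrier_vec d. cinner v (A *\<^sub>v v) \<in> \<real> \<and> 0 \<le> Re (cinner v (A *\<^sub>v v)))"

definition density :: "nat \<Rightarrow> complex mat \<Rightarrow> bool" where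
  "density d W \<longleftrightarrow> psd d W \<and> mtrace W = 1"

definition spectrum :: "complex mat \<Rightarrow> complex set" where
  "spectrum A = {k. eigenvalue A k}"

definition bell :: "nat \<Rightarrow> real mat set" where
  "bell n = {p. p \<in> carrier_mat (n+1) (n+1) \<and> p $$ (0,0) = 1 \<and>
     (\<exists>(d::nat) (E :: nat \<Rightarrow> complex mat) (F :: nat \<Rightarrow> complex mat) (W :: complex mat).
        (\<forall>i\<in>{1..n}. projection d (E i)) \<and> (\<forall>j\<in>{1..n}. projection d (F j)) \<and>
        density (d*d) W \<and>
        (\<forall>i\<in>{1..n}. complex_of_real (p $$ (i,0)) = mtrace (W * kron (E i) (1\<^sub>m d))) \<and>
        (\<forall>j\<in>{1..n}. complex_of_real (p $$ (0,j)) = mtrace (W * kron (1\<^sub>m d) (F j))) \<and>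
        (\<forall>i\<in>{1..n}. \<forall>j\<in>{1..n}. complex_of_real (p $$ (i,j)) = mtrace (W * kron (E i) (F j))))}"

definition bell_plus :: "nat \<Rightarrow> real mat set" where
  "bell_plus n = {q. q \<in> carrier_mat (n+1) (n+1) \<and>
     (\<exists>(d::nat) (A :: nat \<Rightarrow> complex mat) (B :: nat \<Rightarrow> complex mat) (W :: complex mat).
        A 0 = 1\<^sub>m d \<and> B 0 = 1\<^sub>m d \<and>
        (\<forall>i\<in>{1..n}. psd d (A i) \<and> spectrum (A i) \<subseteq> complex_of_real ` {0..1}) \<and>
        (\<forall>j\<in>{1..n}. psd d (B j) \<and> spectrum (B j) \<subseteq> complex_of_real ` {0..1}) \<and>
        density (d*d) W \<and>
        (\<forall>i\<in>{0..n}. \<forall>j\<in>{0..n}. complex_of_real (q $$ (i,j)) = mtrace (W * kron (A i) (B j))))}"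

end

(*
  Projections are positive operators with spectrum in {0, 1}, so every Bell correlation
  matrix is a bell_plus matrix.

  Conversely, an effect A on C^d (a Hermitian operator with spectrum in [0, 1]) is the
  compression J^* E J of a projection E on C^2 (x) C^d along the isometry J v = e0 (x) v
  (Naimark dilation): the spectral theorem gives R = sqrt A and T = sqrt (1 - A), so that
  X v = e0 (x) R v + e1 (x) T v is an isometry, E = X X^* is a projection and
  J^* E J = R R^* = A. Replacing the state W by (J (x) J) W (J (x) J)^*, which is again a
  density operator, turns tr[W (A_i (x) B_j)] into tr[W' (E_i (x) F_j)].
*)

theory Submission
  imports Defs
begin

section \<open>Adjoints, traces and Kronecker products\<close>

lemma adj_dim [simp]: "dim_row (adj A) = dim_col A" "dim_col (adj A) = dim_row A"
  unfolding adj_def by simp_all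

lemma adj_carrier_matI [simp]: "A \<in> carrier_mat r c \<Longrightarrow> adj A \<in> carrier_mat c r"
  by auto

lemma index_adj [simp]:
  "i < dim_col A \<Longrightarrow> j < dim_row A \<Longrightarrow> adj A $$ (i, j) = cnj (A $$ (j, i))"
  unfolding adj_def by simp

lemma adj_adj [simp]: "adj (adj A) = A"
  by (rule eq_matI) auto

lemma adj_one [simp]: "adj (1\<^sub>m n) = 1\<^sub>m n"
  by (rule eq_matI) auto

lemma adj_zero [simp]: "adj (0\<^sub>m r c) = 0\<^sub>m c r"
  by (rule eq_matI) auto

lemma adj_mat_diag: "adj (mat_diag n f) = mat_diag n (\<lambda>k. cnj (f k))"
  by (rule eq_matI) (auto simp: mat_diag_def)

lemma adj_mult:
  assumes "A \<in> carrier_mat r k" "B \<in> carrier_mat k c"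
  shows "adj (A * B) = adj B * adj A"
  by (rule eq_matI)
    (use assms in \<open>auto simp: scalar_prod_def sum_conjugate intro!: sum.cong\<close>)

lemma adj_add:
  assumes "A \<in> carrier_mat r c" "B \<in> carrier_mat r c"
  shows "adj (A + B) = adj A + adj B"
  by (rule eq_matI) (use assms in auto)

lemma adj_four_block_mat:
  assumes "A \<in> carrier_mat r1 c1" "B \<in> carrier_mat r1 c2"
    "C \<in> carrier_mat r2 c1" "D \<in> carrier_mat r2 c2"
  shows "adj (four_block_mat A B C D) = four_block_mat (adj A) (adj C) (adj B) (adj D)"
  by (rule eq_matI) (use assms in auto)

lemma index_mult_mat_sum:
  "A \<in> carrier_mat r k \<Longrightarrow> B \<in> carrier_mat k c \<Longrightarrow> i < r \<Longrightarrow> j < c \<Longrightarrow>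
    (A * B) $$ (i, j) = (\<Sum>l<k. A $$ (i, l) * B $$ (l, j))"
  by (auto simp: scalar_prod_def atLeast0LessThan intro!: sum.cong)

lemma mtrace_mult_comm:
  assumes "A \<in> carrier_mat r c" "B \<in> carrier_mat c r"
  shows "mtrace (A * B) = mtrace (B * A)"
proof -
  have "mtrace (A * B) = (\<Sum>i<r. \<Sum>k<c. A $$ (i, k) * B $$ (k, i))"
    using assms unfolding mtrace_def
    by (auto simp: scalar_prod_def atLeast0LessThan intro!: sum.cong)
  also have "\<dots> = (\<Sum>k<c. \<Sum>i<r. B $$ (k, i) * A $$ (i, k))"
    by (subst sum.swap) (simp add: mult.commute)
  also have "\<dots> = mtrace (B * A)"
    using assms unfolding mtrace_def
    by (auto simp: scalar_prod_def atLeast0LessThan intro!: sum.cong)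
  finally show ?thesis .
qed

lemma cinner_mult_mat_vec:
  assumes M: "M \<in> carrier_mat r c" and v: "v \<in> carrier_vec r" and w: "w \<in> carrier_vec c"
  shows "cinner v (M *\<^sub>v w) = cinner (adj M *\<^sub>v v) w"
proof -
  have "cinner v (M *\<^sub>v w) = (\<Sum>i<r. \<Sum>k<c. cnj (v $ i) * M $$ (i, k) * w $ k)"
    using assms unfolding cinner_def
    by (auto simp: scalar_prod_def atLeast0LessThan sum_distrib_left algebra_simps
        intro!: sum.cong)
  also have "\<dots> = (\<Sum>k<c. \<Sum>i<r. cnj (v $ i) * M $$ (i, k) * w $ k)"
    by (rule sum.swap)
  also have "\<dots> = cinner (adj M *\<^sub>v v) w"
    using assms unfolding cinner_def
    by (auto simp: scalar_prod_def atLeast0LessThan sum_distrib_right sum_conjugate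
        sum_distrib_left algebra_simps intro!: sum.cong)
  finally show ?thesis .
qed

lemma cinner_self: "v \<in> carrier_vec n \<Longrightarrow> cinner v v = of_real (\<Sum>i<n. (cmod (v $ i))\<^sup>2)"
  unfolding cinner_def by (simp flip: complex_norm_square add: mult.commute)

lemma index_kron [simp]:
  "i < dim_row A * dim_row B \<Longrightarrow> j < dim_col A * dim_col B \<Longrightarrow>
    kron A B $$ (i, j) =
      A $$ (i div dim_row B, j div dim_col B) * B $$ (i mod dim_row B, j mod dim_col B)"
  unfolding kron_def by simp

lemma kron_dim [simp]:
  "dim_row (kron A B) = dim_row A * dim_row B" "dim_col (kron A B) = dim_col A * dim_col B"
  unfolding kron_def by simp_all

lemma kron_carrier_mat:
  "A \<in> carrier_mat r1 c1 \<Longrightarrow> B \<in> carrier_mat r2 c2 \<Longrightarrow>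
    kron A B \<in> carrier_mat (r1 * r2) (c1 * c2)"
  by auto

lemma div_mod_less_mult:
  fixes i a b :: nat
  assumes "i < a * b"
  shows "i div b < a" "i mod b < b"
proof -
  from assms have "0 < b" by (cases "b = 0") auto
  with assms show "i div b < a" "i mod b < b" by (simp_all add: less_mult_imp_div_less)
qed

lemma sum_lessThan_mult:
  fixes f :: "nat \<Rightarrow> 'a::comm_monoid_add"
  shows "(\<Sum>c<p * q. f c) = (\<Sum>a<p. \<Sum>b<q. f (a * q + b))"
proof -
  have "\<And>m. sum f {m..<m + q} = (\<Sum>b<q. f (m + b))"
    by (induct q) auto
  then show ?thesis
    by (simp add: sum.nat_group[symmetric])
qed

lemma kron_mult:
  assumes A: "A \<in> carrier_mat r1 k1" and C: "C \<in> carrier_mat k1 c1"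
    and B: "B \<in> carrier_mat r2 k2" and D: "D \<in> carrier_mat k2 c2"
  shows "kron A B * kron C D = kron (A * C) (B * D)"
proof (rule eq_matI)
  fix i j assume "i < dim_row (kron (A * C) (B * D))" "j < dim_col (kron (A * C) (B * D))"
  then have i: "i < r1 * r2" and j: "j < c1 * c2" using assms by auto
  have block: "a * k2 + b < k1 * k2" if "a < k1" "b < k2" for a b
  proof -
    have "a * k2 + b < Suc a * k2" using that by simp
    also have "\<dots> \<le> k1 * k2" using that by (intro mult_le_mono1) simp
    finally show ?thesis .
  qed
  have "(kron A B * kron C D) $$ (i, j) = (\<Sum>c<k1 * k2. kron A B $$ (i, c) * kron C D $$ (c, j))"
    using assms i j by (intro index_mult_mat_sum) auto
  also have "\<dots> =
      (\<Sum>a<k1. \<Sum>b<k2. kron A B $$ (i, a * k2 + b) * kron C D $$ (a * k2 + b, j))"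
    by (rule sum_lessThan_mult)
  also have "\<dots> = (\<Sum>a<k1. \<Sum>b<k2. (A $$ (i div r2, a) * C $$ (a, j div c2)) *
      (B $$ (i mod r2, b) * D $$ (b, j mod c2)))"
    using assms i j block by (intro sum.cong refl) (simp add: algebra_simps)
  also have "\<dots> = (\<Sum>a<k1. A $$ (i div r2, a) * C $$ (a, j div c2)) *
      (\<Sum>b<k2. B $$ (i mod r2, b) * D $$ (b, j mod c2))"
    by (simp add: sum_product)
  also have "\<dots> = kron (A * C) (B * D) $$ (i, j)"
    using assms i j div_mod_less_mult[OF i] div_mod_less_mult[OF j]
    by (simp add: scalar_prod_def atLeast0LessThan)
  finally show "(kron A B * kron C D) $$ (i, j) = kron (A * C) (B * D) $$ (i, j)" .
qed (use assms in auto)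

lemma adj_kron: "adj (kron A B) = kron (adj A) (adj B)"
proof (rule eq_matI)
  fix i j assume "i < dim_row (kron (adj A) (adj B))" "j < dim_col (kron (adj A) (adj B))"
  then have i: "i < dim_col A * dim_col B" and j: "j < dim_row A * dim_row B" by auto
  show "adj (kron A B) $$ (i, j) = kron (adj A) (adj B) $$ (i, j)"
    using i j div_mod_less_mult[OF i] div_mod_less_mult[OF j] by simp
qed auto

lemma kron_one: "kron (1\<^sub>m a) (1\<^sub>m b) = 1\<^sub>m (a * b)"
proof (rule eq_matI)
  fix i j assume "i < dim_row (1\<^sub>m (a * b))" "j < dim_col (1\<^sub>m (a * b))"
  then have i: "i < a * b" and j: "j < a * b" by auto
  have "(i div b = j div b \<and> i mod b = j mod b) = (i = j)"
    by (metis div_mult_mod_eq)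
  then show "kron (1\<^sub>m a) (1\<^sub>m b) $$ (i, j) = 1\<^sub>m (a * b) $$ (i, j)"
    using i j div_mod_less_mult[OF i] div_mod_less_mult[OF j] by auto
qed auto

section \<open>The spectral theorem for Hermitian matrices\<close>

definition unitary :: "nat \<Rightarrow> complex mat \<Rightarrow> bool" where
  "unitary n U \<longleftrightarrow> U \<in> carrier_mat n n \<and> adj U * U = 1\<^sub>m n"

lemma unitary_carrier_mat: "unitary n U \<Longrightarrow> U \<in> carrier_mat n n"
  unfolding unitary_def by simp

lemma unitary_mult_adj: "unitary n U \<Longrightarrow> U * adj U = 1\<^sub>m n"
  unfolding unitary_def using mat_mult_left_right_inverse[of "adj U" n U] by simp

lemma unitary_mult:
  assumes U: "unitary n U" and V: "unitary n V"
  shows "unitary n (U * V)"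
proof -
  have Uc: "U \<in> carrier_mat n n" and Vc: "V \<in> carrier_mat n n"
    using U V by (simp_all add: unitary_carrier_mat)
  have "adj (U * V) * (U * V) = adj V * ((adj U * U) * V)"
    using Uc Vc by (simp add: adj_mult[OF Uc Vc] assoc_mult_mat[of _ n n _ n _ n])
  also have "\<dots> = 1\<^sub>m n"
    using U V Vc unfolding unitary_def by simp
  finally show ?thesis
    using Uc Vc unfolding unitary_def by simp
qed

lemma unitary_conj_adj_cancel:
  assumes H: "unitary n H" and A: "A \<in> carrier_mat n n"
  shows "H * (adj H * A * H) * adj H = A"
proof -
  have Hc: "H \<in> carrier_mat n n" using H by (rule unitary_carrier_mat)
  have HA: "adj H * A \<in> carrier_mat n n" using mult_carrier_mat[OF adj_carrier_matI[OF Hc] A] .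
  have "H * (adj H * A * H) * adj H = H * (adj H * A * (H * adj H))"
    using Hc HA by (simp add: assoc_mult_mat[of _ n n _ n _ n])
  also have "\<dots> = H * (adj H * A)"
    using right_mult_one_mat[OF HA] unitary_mult_adj[OF H] by simp
  also have "\<dots> = (H * adj H) * A"
    using Hc A by (simp add: assoc_mult_mat[of _ n n _ n _ n])
  finally show ?thesis
    using unitary_mult_adj[OF H] A by simp
qed

lemma eigenvector_exists:
  fixes A :: "complex mat"
  assumes A: "A \<in> carrier_mat n n" and n: "0 < n"
  shows "\<exists>k v. v \<in> carrier_vec n \<and> v \<noteq> 0\<^sub>v n \<and> A *\<^sub>v v = k \<cdot>\<^sub>v v"
proof -
  have "\<not> Fundamental_Theorem_Algebra.constant (poly (char_poly A))"
    using degree_monic_char_poly[OF A] n constant_degree[of "char_poly A"] by simp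
  then obtain k where "poly (char_poly A) k = 0"
    using fundamental_theorem_of_algebra by blast
  then show ?thesis
    using A eigenvalue_root_char_poly[OF A] unfolding eigenvalue_def eigenvector_def by auto
qed

lemma normalized_multiple_exists:
  assumes v: "v \<in> carrier_vec n" "v \<noteq> 0\<^sub>v n" and n: "0 < n"
  shows "\<exists>c r. cinner (c \<cdot>\<^sub>v v) (c \<cdot>\<^sub>v v) = 1 \<and>
    (c \<cdot>\<^sub>v v) $ 0 = of_real r \<and> r \<le> 0"
proof -
  define s where "s = (\<Sum>i<n. (cmod (v $ i))\<^sup>2)"
  obtain i where i: "i < n" "v $ i \<noteq> 0"
    using v by (metis carrier_vecD eq_vecI index_zero_vec)
  have "0 < (cmod (v $ i))\<^sup>2" using i by simp
  also have "\<dots> \<le> s" unfolding s_def by (rule member_le_sum) (use i in auto)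
  finally have s: "0 < s" .
  \<comment> \<open>the phase of \<open>c\<close> makes the first coordinate real and nonpositive\<close>
  define c where "c = (if v $ 0 = 0 then 1 else - cnj (v $ 0) / of_real (cmod (v $ 0)))
    / of_real (sqrt s)"
  have "cmod c = 1 / sqrt s"
    unfolding c_def using s by (simp add: norm_divide)
  moreover have "cinner (c \<cdot>\<^sub>v v) (c \<cdot>\<^sub>v v) = of_real ((cmod c)\<^sup>2 * s)"
    using v unfolding s_def by (simp add: cinner_self norm_mult power_mult_distrib sum_distrib_left)
  ultimately have "cinner (c \<cdot>\<^sub>v v) (c \<cdot>\<^sub>v v) = 1"
    using s by (simp add: power_divide)
  moreover have "(c \<cdot>\<^sub>v v) $ 0 = of_real (- cmod (v $ 0) / sqrt s)"
  proof (cases "v $ 0 = 0")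
    case False
    have "cnj (v $ 0) * v $ 0 = of_real ((cmod (v $ 0))\<^sup>2)"
      by (simp flip: complex_norm_square add: mult.commute)
    then show ?thesis
      using n v False unfolding c_def by (simp add: power2_eq_square)
  qed (use n v in simp)
  moreover have "- cmod (v $ 0) / sqrt s \<le> 0" using s by simp
  ultimately show ?thesis by blast
qed

lemma unit_eigenvector_exists:
  fixes A :: "complex mat"
  assumes A: "A \<in> carrier_mat n n" and n: "0 < n"
  shows "\<exists>k u r. u \<in> carrier_vec n \<and> A *\<^sub>v u = k \<cdot>\<^sub>v u \<and> cinner u u = 1 \<and>
    u $ 0 = of_real r \<and> r \<le> 0"
proof -
  obtain k v where v: "v \<in> carrier_vec n" "v \<noteq> 0\<^sub>v n" and Av: "A *\<^sub>v v = k \<cdot>\<^sub>v v"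
    using eigenvector_exists[OF A n] by blast
  obtain c r where "cinner (c \<cdot>\<^sub>v v) (c \<cdot>\<^sub>v v) = 1" "(c \<cdot>\<^sub>v v) $ 0 = of_real r" "r \<le> 0"
    using normalized_multiple_exists[OF v n] by blast
  moreover have "A *\<^sub>v (c \<cdot>\<^sub>v v) = k \<cdot>\<^sub>v (c \<cdot>\<^sub>v v)"
    using A v Av by (simp add: mult_mat_vec smult_smult_assoc mult.commute)
  ultimately show ?thesis
    using v by (intro exI[of _ k] exI[of _ "c \<cdot>\<^sub>v v"]) auto
qed

definition householder :: "nat \<Rightarrow> real \<Rightarrow> (nat \<Rightarrow> complex) \<Rightarrow> complex mat" where
  "householder n c w = mat n n (\<lambda>(i, j). (if i = j then 1 else 0) - of_real c * w i * cnj (w j))"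

lemma unitary_householder:
  assumes ww: "of_real c * (\<Sum>k<n. cnj (w k) * w k) = 2"
  shows "unitary n (householder n c w)"
proof -
  define H where "H = householder n c w"
  have Hc: "H \<in> carrier_mat n n" unfolding H_def householder_def by simp
  have "adj H * H = 1\<^sub>m n"
  proof (rule eq_matI)
    fix i j assume "i < dim_row (1\<^sub>m n)" "j < dim_col (1\<^sub>m n)"
    then have i: "i < n" and j: "j < n" by auto
    let ?c = "complex_of_real c"
    have "(adj H * H) $$ (i, j) = (\<Sum>k<n. cnj (H $$ (k, i)) * H $$ (k, j))"
      using Hc i j by (subst index_mult_mat_sum[of _ n n _ n]) auto
    also have "\<dots> = (\<Sum>k<n. (if k = i \<and> k = j then 1 else 0)
        - (if k = i then ?c * w i * cnj (w j) else 0) - (if k = j then ?c * cnj (w j) * w i else 0)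
        + ?c\<^sup>2 * w i * cnj (w j) * (cnj (w k) * w k))"
    proof (rule sum.cong[OF refl])
      fix k assume "k \<in> {..<n}"
      then have H_entries: "cnj (H $$ (k, i)) = (if k = i then 1 else 0) - ?c * cnj (w k) * w i"
        "H $$ (k, j) = (if k = j then 1 else 0) - ?c * w k * cnj (w j)"
        unfolding H_def householder_def using i j by auto
      show "cnj (H $$ (k, i)) * H $$ (k, j) = (if k = i \<and> k = j then 1 else 0)
        - (if k = i then ?c * w i * cnj (w j) else 0) - (if k = j then ?c * cnj (w j) * w i else 0)
        + ?c\<^sup>2 * w i * cnj (w j) * (cnj (w k) * w k)"
        unfolding H_entries
        by (cases "k = i"; cases "k = j") (auto simp: algebra_simps power2_eq_square)
    qed
    also have "\<dots> = (if i = j then 1 else 0) - ?c * w i * cnj (w j) - ?c * cnj (w j) * w i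
        + ?c\<^sup>2 * w i * cnj (w j) * (\<Sum>k<n. cnj (w k) * w k)"
    proof -
      have "(\<Sum>k<n. if k = i \<and> k = j then 1 else 0) = (if i = j then 1 else (0::complex))"
        using i by (cases "i = j") (auto intro!: sum.neutral)
      then show ?thesis using i j by (simp add: sum.distrib sum_subtractf sum_distrib_left)
    qed
    also have "\<dots> = (if i = j then 1 else 0) - 2 * (?c * w i * cnj (w j))
        + (?c * (\<Sum>k<n. cnj (w k) * w k)) * (?c * w i * cnj (w j))"
      by (simp add: power2_eq_square algebra_simps)
    finally show "(adj H * H) $$ (i, j) = 1\<^sub>m n $$ (i, j)"
      using i j ww by simp
  qed (use Hc in auto)
  then show ?thesis
    using Hc unfolding unitary_def H_def by simp
qed

lemma unitary_with_first_column:
  assumes u: "u \<in> carrier_vec n" "cinner u u = 1" "u $ 0 = of_real r" "r \<le> 0" and n: "0 < n"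
  shows "\<exists>H. unitary n H \<and> col H 0 = u"
proof -
  \<comment> \<open>the reflection in the hyperplane orthogonal to \<open>u - e\<^sub>0\<close>; it maps \<open>e\<^sub>0\<close> to \<open>u\<close>\<close>
  define w where "w i = u $ i - (if i = 0 then 1 else 0)" for i
  define c where "c = 1 / (1 - r)"
  have r: "1 - r \<noteq> 0" using u by simp
  have "(\<Sum>k<n. cnj (w k) * w k) =
      (\<Sum>k<n. cnj (u $ k) * u $ k - (if k = 0 then cnj (u $ k) + u $ k - 1 else 0))"
    by (rule sum.cong) (auto simp: w_def algebra_simps)
  also have "\<dots> = cinner u u - (cnj (u $ 0) + u $ 0 - 1)"
    using n u unfolding cinner_def by (simp add: sum_subtractf)
  finally have "of_real c * (\<Sum>k<n. cnj (w k) * w k) = 2"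
    using u r unfolding c_def by (simp add: field_simps)
  moreover have "col (householder n c w) 0 = u"
  proof (rule eq_vecI)
    fix i assume "i < dim_vec u"
    then have i: "i < n" using u by simp
    have "of_real c * (of_real r - 1) = (-1 :: complex)"
      unfolding c_def using r by (simp add: field_simps)
    moreover have "cnj (w 0) = of_real r - 1" using u unfolding w_def by simp
    ultimately have "of_real c * w i * cnj (w 0) = - w i"
      by (metis mult.commute mult.left_commute mult_minus1_right)
    then show "col (householder n c w) 0 $ i = u $ i"
      unfolding householder_def using i n by (simp add: w_def)
  qed (use u in \<open>simp add: householder_def\<close>)
  ultimately show ?thesis
    using unitary_householder by blast
qed

lemma hermitian_adj_mult_mult:
  assumes A: "hermitian n A" and U: "U \<in> carrier_mat n m"
  shows "hermitian m (adj U * A * U)"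
proof -
  have Ac: "A \<in> carrier_mat n n" and adjA: "adj A = A" using A unfolding hermitian_def by auto
  have "adj (adj U * A * U) = adj U * adj (adj U * A)"
    using adj_mult[OF mult_carrier_mat[OF adj_carrier_matI[OF U] Ac] U] by simp
  also have "\<dots> = adj U * (A * U)"
    using adj_mult[OF adj_carrier_matI[OF U] Ac] adjA by simp
  also have "\<dots> = adj U * A * U"
    using Ac U by (simp add: assoc_mult_mat[of _ m n _ n _ m])
  finally show ?thesis
    using Ac U unfolding hermitian_def by (simp add: mult_carrier_mat[of _ m n])
qed

lemma unitary_eigenvector_first_column:
  assumes A: "A \<in> carrier_mat n n" and H: "unitary n H" and n: "0 < n"
    and eig: "A *\<^sub>v col H 0 = k \<cdot>\<^sub>v col H 0"
  shows "col (adj H * A * H) 0 = k \<cdot>\<^sub>v col (1\<^sub>m n) 0"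
proof -
  have Hc: "H \<in> carrier_mat n n" using H by (rule unitary_carrier_mat)
  have "col (adj H * A * H) 0 = (adj H * A) *\<^sub>v col H 0"
    using A Hc n by (intro col_mult2[of _ n n]) auto
  also have "\<dots> = adj H *\<^sub>v (A *\<^sub>v col H 0)"
    using A Hc n by (intro assoc_mult_mat_vec[of _ n n _ n]) auto
  also have "\<dots> = k \<cdot>\<^sub>v (adj H *\<^sub>v col H 0)"
    unfolding eig using Hc by (intro mult_mat_vec[of _ n n]) auto
  also have "adj H *\<^sub>v col H 0 = col (adj H * H) 0"
    using col_mult2[OF adj_carrier_matI[OF Hc] Hc n] by simp
  finally show ?thesis using H unfolding unitary_def by simp
qed

lemma hermitian_four_block_first_column:
  assumes C: "hermitian (Suc m) C" and col0: "col C 0 = k \<cdot>\<^sub>v col (1\<^sub>m (Suc m)) 0"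
  defines "B \<equiv> mat m m (\<lambda>(i, j). C $$ (Suc i, Suc j))"
  shows "hermitian m B" "C = four_block_mat (k \<cdot>\<^sub>m 1\<^sub>m 1) (0\<^sub>m 1 m) (0\<^sub>m m 1) B"
proof -
  have Cc: "C \<in> carrier_mat (Suc m) (Suc m)" and adjC: "adj C = C"
    using C unfolding hermitian_def by auto
  have Ci0: "C $$ (i, 0) = (if i = 0 then k else 0)" if "i < Suc m" for i
    using arg_cong[OF col0, of "\<lambda>v. v $ i"] that Cc by auto
  have C0j: "C $$ (0, j) = (if j = 0 then k else 0)" if j: "j < Suc m" for j
  proof -
    have "C $$ (0, j) = cnj (C $$ (j, 0))"
      using arg_cong[OF adjC, of "\<lambda>M. M $$ (0, j)"] Cc j by simp
    then show ?thesis using Ci0[OF j] Ci0[of 0] by auto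
  qed
  have "adj B = B"
  proof (rule eq_matI)
    fix i j assume "i < dim_row B" "j < dim_col B"
    then have ij: "i < m" "j < m" unfolding B_def by auto
    have "adj B $$ (i, j) = adj C $$ (Suc i, Suc j)"
      using ij Cc unfolding B_def by simp
    then show "adj B $$ (i, j) = B $$ (i, j)"
      using ij unfolding adjC B_def by simp
  qed (simp_all add: B_def)
  then show "hermitian m B"
    unfolding hermitian_def B_def by simp
  show "C = four_block_mat (k \<cdot>\<^sub>m 1\<^sub>m 1) (0\<^sub>m 1 m) (0\<^sub>m m 1) B"
    by (rule eq_matI) (use Cc Ci0 C0j in \<open>auto simp: B_def\<close>)
qed

lemma mult_four_block_diag_mat:
  assumes "A1 \<in> carrier_mat a a" "D1 \<in> carrier_mat b b"
    "A2 \<in> carrier_mat a a" "D2 \<in> carrier_mat b b"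
  shows "four_block_mat A1 (0\<^sub>m a b) (0\<^sub>m b a) D1 * four_block_mat A2 (0\<^sub>m a b) (0\<^sub>m b a) D2 =
    four_block_mat (A1 * A2) (0\<^sub>m a b) (0\<^sub>m b a) (D1 * D2)"
  using assms by (simp add: mult_four_block_mat[OF assms(1) _ _ assms(2) assms(3) _ _ assms(4)])

lemma unitary_four_block_diag_mat:
  assumes U: "unitary a U" and V: "unitary b V"
  shows "unitary (a + b) (four_block_mat U (0\<^sub>m a b) (0\<^sub>m b a) V)"
proof -
  have Uc: "U \<in> carrier_mat a a" and Vc: "V \<in> carrier_mat b b"
    using U V by (simp_all add: unitary_carrier_mat)
  have "adj (four_block_mat U (0\<^sub>m a b) (0\<^sub>m b a) V) =
      four_block_mat (adj U) (0\<^sub>m a b) (0\<^sub>m b a) (adj V)"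
    using Uc Vc by (simp add: adj_four_block_mat[of _ a a _ b _ b])
  then show ?thesis
    using U V Uc Vc unfolding unitary_def by (simp add: mult_four_block_diag_mat)
qed

lemma mat_diag_Suc_four_block:
  fixes f :: "nat \<Rightarrow> 'a::semiring_1"
  shows "mat_diag (Suc m) f =
    four_block_mat (f 0 \<cdot>\<^sub>m 1\<^sub>m 1) (0\<^sub>m 1 m) (0\<^sub>m m 1) (mat_diag m (\<lambda>j. f (Suc j)))"
  by (rule eq_matI) (auto simp: mat_diag_def)

theorem hermitian_spectral_decomposition:
  "hermitian n A \<Longrightarrow> \<exists>U f. unitary n U \<and> A = U * mat_diag n f * adj U"
proof (induction n arbitrary: A)
  case 0
  then have "A = 1\<^sub>m 0 * mat_diag 0 f * adj (1\<^sub>m 0)" for f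
    unfolding hermitian_def by (intro eq_matI) auto
  then show ?case unfolding unitary_def by (intro exI[of _ "1\<^sub>m 0"]) auto
next
  case (Suc m)
  have A: "A \<in> carrier_mat (Suc m) (Suc m)" using Suc.prems unfolding hermitian_def by simp
  obtain k u r where u: "u \<in> carrier_vec (Suc m)" "cinner u u = 1" "u $ 0 = of_real r" "r \<le> 0"
    and Au: "A *\<^sub>v u = k \<cdot>\<^sub>v u"
    using unit_eigenvector_exists[OF A] by blast
  obtain H where H: "unitary (Suc m) H" and Hu: "col H 0 = u"
    using unitary_with_first_column[OF u] by blast
  \<comment> \<open>conjugating by \<open>H\<close> splits off the eigenvalue \<open>k\<close> as a \<open>1 \<times> 1\<close> block\<close>
  define C where "C = adj H * A * H"
  have C: "hermitian (Suc m) C"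
    unfolding C_def using Suc.prems unitary_carrier_mat[OF H] by (rule hermitian_adj_mult_mult)
  have "col C 0 = k \<cdot>\<^sub>v col (1\<^sub>m (Suc m)) 0"
    unfolding C_def using A H Au Hu by (intro unitary_eigenvector_first_column) auto
  then obtain B where B: "hermitian m B"
    and C_blocks: "C = four_block_mat (k \<cdot>\<^sub>m 1\<^sub>m 1) (0\<^sub>m 1 m) (0\<^sub>m m 1) B"
    using hermitian_four_block_first_column[OF C] by blast
  obtain V g where V: "unitary m V" and BV: "B = V * mat_diag m g * adj V"
    using Suc.IH[OF B] by blast
  define U where "U = four_block_mat (1\<^sub>m 1) (0\<^sub>m 1 m) (0\<^sub>m m 1) V"
  define f where "f = case_nat k g"
  have U: "unitary (Suc m) U"
    unfolding U_def using unitary_four_block_diag_mat[OF _ V, of 1] by (simp add: unitary_def)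
  have Vc: "V \<in> carrier_mat m m" using V by (rule unitary_carrier_mat)
  have "C = U * mat_diag (Suc m) f * adj U"
    using Vc unfolding C_blocks BV U_def f_def mat_diag_Suc_four_block
    by (simp add: adj_four_block_mat[of _ 1 1 _ m _ m] mult_four_block_diag_mat)
  then have "A = (H * U) * mat_diag (Suc m) f * adj (H * U)"
    using unitary_conj_adj_cancel[OF H A] unitary_carrier_mat[OF H] unitary_carrier_mat[OF U]
    unfolding C_def
    by (simp add: adj_mult[of _ "Suc m" "Suc m"] assoc_mult_mat[of _ "Suc m" "Suc m" _ "Suc m" _ "Suc m"]
        mult_carrier_mat[of _ "Suc m" "Suc m"])
  then show ?case
    using unitary_mult[OF H U] by blast
qed

section \<open>Square roots of effects\<close>

lemma mat_diag_cong: "(\<And>k. k < n \<Longrightarrow> f k = g k) \<Longrightarrow> mat_diag n f = mat_diag n g"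
  by (rule eq_matI) (auto simp: mat_diag_def)

lemma dim_mat_diag [simp]: "dim_row (mat_diag n f) = n" "dim_col (mat_diag n f) = n"
  by (simp_all add: mat_diag_def)

lemma mat_diag_add:
  fixes f g :: "nat \<Rightarrow> 'a::monoid_add"
  shows "mat_diag n f + mat_diag n g = mat_diag n (\<lambda>k. f k + g k)"
  by (rule eq_matI) (auto simp: mat_diag_def)

lemma unitary_diag_eigenvalue:
  assumes U: "unitary n U" and A: "A = U * mat_diag n f * adj U" and k: "k < n"
  shows "eigenvalue A (f k)"
proof -
  have Uc: "U \<in> carrier_mat n n" using U by (rule unitary_carrier_mat)
  have Ac: "A \<in> carrier_mat n n"
    unfolding A using Uc by (simp add: mult_carrier_mat[of _ n n])
  have "A * U = U * mat_diag n f * (adj U * U)"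
    unfolding A using Uc
    by (simp add: assoc_mult_mat[of _ n n _ n _ n] mult_carrier_mat[of _ n n])
  then have AU: "A * U = U * mat_diag n f"
    using U Uc unfolding unitary_def by simp
  have "A *\<^sub>v col U k = col (U * mat_diag n f) k"
    using col_mult2[OF Ac Uc k] AU by simp
  also have "\<dots> = f k \<cdot>\<^sub>v col U k"
    by (rule eq_vecI) (use Uc k in \<open>simp_all add: mat_diag_mult_right[OF Uc]\<close>)
  finally have eig: "A *\<^sub>v col U k = f k \<cdot>\<^sub>v col U k" .
  have "col U k \<noteq> 0\<^sub>v n"
  proof
    assume "col U k = 0\<^sub>v n"
    then have "(adj U * U) $$ (k, k) = row (adj U) k \<bullet> 0\<^sub>v n"
      using Uc k by simp
    also have "\<dots> = 0"
      using Uc k by (intro scalar_prod_right_zero) simp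
    finally show False
      using U k unfolding unitary_def by simp
  qed
  moreover have "col U k \<in> carrier_vec n"
    using Uc by (simp add: carrier_vecI)
  ultimately show ?thesis
    unfolding eigenvalue_def eigenvector_def using eig Ac by blast
qed

lemma unitary_conj_diag_mult:
  assumes U: "unitary n U"
  shows "(U * mat_diag n a * adj U) * (U * mat_diag n b * adj U) =
    U * mat_diag n (\<lambda>k. a k * b k) * adj U"
proof -
  have Uc: "U \<in> carrier_mat n n" using U by (rule unitary_carrier_mat)
  have "(U * mat_diag n a * adj U) * (U * mat_diag n b * adj U) =
      U * (mat_diag n a * ((adj U * U) * (mat_diag n b * adj U)))"
    using Uc by (simp add: assoc_mult_mat[of _ n n _ n _ n] mult_carrier_mat[of _ n n])
  also have "\<dots> = U * (mat_diag n a * (mat_diag n b * adj U))"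
    using U Uc unfolding unitary_def by (simp add: mult_carrier_mat[of _ n n])
  also have "\<dots> = U * ((mat_diag n a * mat_diag n b) * adj U)"
    using Uc by (subst assoc_mult_mat[of "mat_diag n a" n n _ n "adj U" n]) auto
  finally show ?thesis
    using Uc by (simp add: assoc_mult_mat[of _ n n _ n _ n])
qed

lemma unitary_conj_diag_add:
  assumes U: "U \<in> carrier_mat n n"
  shows "U * mat_diag n a * adj U + U * mat_diag n b * adj U =
    U * mat_diag n (\<lambda>k. a k + b k) * adj U"
  using U by (simp add: mult_add_distrib_mat[of U n n _ n] add_mult_distrib_mat[of _ n n _ _ n]
      mult_carrier_mat[of _ n n] flip: mat_diag_add)

lemma adj_unitary_conj_diag:
  assumes U: "U \<in> carrier_mat n n"
  shows "adj (U * mat_diag n a * adj U) = U * mat_diag n (\<lambda>k. cnj (a k)) * adj U"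
  using U by (simp add: adj_mult[of _ n n _ n] mult_carrier_mat[of _ n n] adj_mat_diag
      assoc_mult_mat[of _ n n _ n _ n])

lemma effect_square_roots:
  assumes A: "hermitian d A" and spec: "spectrum A \<subseteq> complex_of_real ` {0..1}"
  shows "\<exists>R T. hermitian d R \<and> hermitian d T \<and> R * R = A \<and> R * R + T * T = 1\<^sub>m d"
proof -
  obtain U f where U: "unitary d U" and A_diag: "A = U * mat_diag d f * adj U"
    using hermitian_spectral_decomposition[OF A] by blast
  have Uc: "U \<in> carrier_mat d d" using U by (rule unitary_carrier_mat)
  define t where "t k = Re (f k)" for k
  have t: "f k = of_real (t k)" "0 \<le> t k" "t k \<le> 1" if "k < d" for k
  proof -
    have "f k \<in> spectrum A"
      using unitary_diag_eigenvalue[OF U A_diag that] unfolding spectrum_def by simp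
    then show "f k = of_real (t k)" "0 \<le> t k" "t k \<le> 1"
      using spec unfolding t_def by auto
  qed
  define a where "a k = complex_of_real (sqrt (t k))" for k
  define b where "b k = complex_of_real (sqrt (1 - t k))" for k
  define R where "R = U * mat_diag d a * adj U"
  define T where "T = U * mat_diag d b * adj U"
  have "hermitian d R" "hermitian d T"
    unfolding hermitian_def R_def T_def a_def b_def using Uc
    by (simp_all add: adj_unitary_conj_diag mult_carrier_mat[of _ d d])
  moreover have RR: "R * R = A"
  proof -
    have "R * R = U * mat_diag d (\<lambda>k. a k * a k) * adj U"
      unfolding R_def by (rule unitary_conj_diag_mult[OF U])
    also have "mat_diag d (\<lambda>k. a k * a k) = mat_diag d f"
      using t by (intro mat_diag_cong) (simp add: a_def flip: of_real_mult)
    finally show ?thesis unfolding A_diag .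
  qed
  moreover have "R * R + T * T = 1\<^sub>m d"
  proof -
    have "R * R + T * T = U * mat_diag d (\<lambda>k. a k * a k + b k * b k) * adj U"
      unfolding R_def T_def unitary_conj_diag_mult[OF U] by (rule unitary_conj_diag_add[OF Uc])
    also have "mat_diag d (\<lambda>k. a k * a k + b k * b k) = 1\<^sub>m d"
      using t by (subst mat_diag_one[symmetric], intro mat_diag_cong)
        (simp add: a_def b_def flip: of_real_mult of_real_add)
    finally show ?thesis
      using unitary_mult_adj[OF U] Uc by simp
  qed
  ultimately show ?thesis by blast
qed

section \<open>Naimark dilation of effects\<close>

definition unit_col :: "nat \<Rightarrow> nat \<Rightarrow> complex mat" where
  "unit_col n k = mat n 1 (\<lambda>(i, _). if i = k then 1 else 0)"

lemma unit_col_dim [simp]: "dim_row (unit_col n k) = n" "dim_col (unit_col n k) = 1"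
  unfolding unit_col_def by simp_all

lemma unit_col_carrier_mat [simp]: "unit_col n k \<in> carrier_mat n 1"
  unfolding carrier_mat_def by simp

lemma adj_unit_col_mult_unit_col:
  assumes "a < n" "b < n"
  shows "adj (unit_col n a) * unit_col n b = (if a = b then 1\<^sub>m 1 else 0\<^sub>m 1 1)"
proof -
  have "(adj (unit_col n a) * unit_col n b) $$ (0, 0) =
      (\<Sum>l<n. adj (unit_col n a) $$ (0, l) * unit_col n b $$ (l, 0))"
    by (rule index_mult_mat_sum) auto
  also have "\<dots> = (\<Sum>l<n. if l = a \<and> l = b then 1 else 0)"
    by (rule sum.cong) (auto simp: unit_col_def)
  also have "\<dots> = (if a = b then 1 else 0)"
    using assms by (cases "a = b") (auto intro!: sum.neutral)
  finally show ?thesis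
    by (intro eq_matI) auto
qed

lemma projection_mult_adj_isometry:
  assumes X: "X \<in> carrier_mat m n" and XX: "adj X * X = 1\<^sub>m n"
  shows "projection m (X * adj X)"
proof -
  have "X * adj X * (X * adj X) = X * ((adj X * X) * adj X)"
    using X by (simp add: assoc_mult_mat[of X m n "adj X" m "X * adj X" m]
        assoc_mult_mat[of "adj X" n m X n "adj X" m])
  then show ?thesis
    unfolding projection_def hermitian_def using X XX carrier_matD[OF X]
    by (simp add: adj_mult[of _ m n _ m])
qed

definition dilation_embedding :: "nat \<Rightarrow> complex mat" where
  "dilation_embedding d = kron (unit_col 2 0) (1\<^sub>m d)"

lemma kron_unit_col_carrier_mat [simp]:
  "P \<in> carrier_mat d c \<Longrightarrow> kron (unit_col n k) P \<in> carrier_mat (n * d) c"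
  using kron_carrier_mat[OF unit_col_carrier_mat] by fastforce

lemma dilation_embedding_carrier_mat: "dilation_embedding d \<in> carrier_mat (2 * d) d"
  unfolding dilation_embedding_def using kron_carrier_mat[OF unit_col_carrier_mat one_carrier_mat]
  by simp

lemma dilation_embedding_isometry: "adj (dilation_embedding d) * dilation_embedding d = 1\<^sub>m d"
proof -
  have "kron (adj (unit_col 2 0)) (1\<^sub>m d) * kron (unit_col 2 0) (1\<^sub>m d) =
      kron (adj (unit_col 2 0) * unit_col 2 0) (1\<^sub>m d * 1\<^sub>m d)"
    by (rule kron_mult) auto
  then show ?thesis
    unfolding dilation_embedding_def adj_kron by (simp add: adj_unit_col_mult_unit_col kron_one)
qed

lemma adj_kron_unit_col_mult:
  assumes "a < 2" "b < 2" "P \<in> carrier_mat d c" "Q \<in> carrier_mat d c'"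
  shows "adj (kron (unit_col 2 a) P) * kron (unit_col 2 b) Q = (if a = b then adj P * Q else 0\<^sub>m c c')"
proof -
  have "adj (kron (unit_col 2 a) P) * kron (unit_col 2 b) Q =
      kron (adj (unit_col 2 a) * unit_col 2 b) (adj P * Q)"
    unfolding adj_kron
    by (rule kron_mult[OF adj_carrier_matI[OF unit_col_carrier_mat] unit_col_carrier_mat
          adj_carrier_matI[OF assms(3)] assms(4)])
  also have "\<dots> = (if a = b then adj P * Q else 0\<^sub>m c c')"
    using assms unfolding adj_unit_col_mult_unit_col[OF assms(1,2)] by auto
  finally show ?thesis .
qed

lemma projection_dilation:
  assumes R: "R \<in> carrier_mat d d" and T: "T \<in> carrier_mat d d"
    and RT: "adj R * R + adj T * T = 1\<^sub>m d"
  defines "J \<equiv> dilation_embedding d"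
  shows "\<exists>E. projection (2 * d) E \<and> adj J * E * J = R * adj R"
proof -
  define X0 where "X0 = kron (unit_col 2 0) R"
  define X1 where "X1 = kron (unit_col 2 1) T"
  define X where "X = X0 + X1"
  have X0: "X0 \<in> carrier_mat (2 * d) d" and X1: "X1 \<in> carrier_mat (2 * d) d"
    unfolding X0_def X1_def using R T by simp_all
  have Xc: "X \<in> carrier_mat (2 * d) d"
    unfolding X_def using X0 X1 by simp
  have Jc: "J \<in> carrier_mat (2 * d) d"
    unfolding J_def by (rule dilation_embedding_carrier_mat)
  have adjX: "adj X = adj X0 + adj X1"
    unfolding X_def by (rule adj_add[OF X0 X1])
  have "adj X * X = (adj X0 + adj X1) * X0 + (adj X0 + adj X1) * X1"
    unfolding adjX unfolding X_def using X0 X1 by (intro mult_add_distrib_mat[of _ d "2 * d"]) auto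
  also have "\<dots> = (adj X0 * X0 + adj X1 * X0) + (adj X0 * X1 + adj X1 * X1)"
    using add_mult_distrib_mat[OF adj_carrier_matI[OF X0] adj_carrier_matI[OF X1] X0]
      add_mult_distrib_mat[OF adj_carrier_matI[OF X0] adj_carrier_matI[OF X1] X1]
    by simp
  also have "\<dots> = adj R * R + adj T * T"
    unfolding X0_def X1_def using R T
    by (simp add: adj_kron_unit_col_mult mult_carrier_mat[of _ d d] right_add_zero_mat[of _ d d]
        left_add_zero_mat[of _ d d])
  finally have XX: "adj X * X = 1\<^sub>m d" using RT by simp
  have "adj J * X = adj J * X0 + adj J * X1"
    unfolding X_def using Jc X0 X1 by (intro mult_add_distrib_mat[of _ d "2 * d"]) auto
  moreover have "adj J * X0 = R" "adj J * X1 = 0\<^sub>m d d"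
    unfolding J_def dilation_embedding_def X0_def X1_def
    using adj_kron_unit_col_mult[OF _ _ one_carrier_mat R, of 0 0]
      adj_kron_unit_col_mult[OF _ _ one_carrier_mat T, of 0 1] R T by simp_all
  ultimately have JX: "adj J * X = R"
    using R by simp
  have "adj J * (X * adj X) * J = adj J * (X * (adj X * J))"
    using Jc Xc by (simp add: assoc_mult_mat[of "adj J" d "2 * d" "X * adj X" "2 * d" J d]
        assoc_mult_mat[of X "2 * d" d "adj X" "2 * d" J d])
  also have "\<dots> = (adj J * X) * adj (adj J * X)"
    using assoc_mult_mat[OF adj_carrier_matI[OF Jc] Xc mult_carrier_mat[OF adj_carrier_matI[OF Xc] Jc]]
      adj_mult[OF adj_carrier_matI[OF Jc] Xc] by simp
  finally show ?thesis
    using projection_mult_adj_isometry[OF Xc XX] JX by auto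
qed

lemma effect_compression_of_projection:
  assumes "hermitian d A" and "spectrum A \<subseteq> complex_of_real ` {0..1}"
  shows "\<exists>E. projection (2 * d) E \<and> adj (dilation_embedding d) * E * dilation_embedding d = A"
proof -
  obtain R T where "hermitian d R" "hermitian d T" "R * R = A" "R * R + T * T = 1\<^sub>m d"
    using effect_square_roots[OF assms] by blast
  then show ?thesis
    using projection_dilation[of R d T] unfolding hermitian_def by auto
qed

lemma effect_family_dilation:
  fixes A :: "nat \<Rightarrow> complex mat" and n :: nat
  assumes A0: "A 0 = 1\<^sub>m d"
    and A: "\<forall>i\<in>{1..n}. psd d (A i) \<and> spectrum (A i) \<subseteq> complex_of_real ` {0..1}"
  defines "J \<equiv> dilation_embedding d"
  shows "\<exists>E. E 0 = 1\<^sub>m (2 * d) \<and> (\<forall>i\<in>{1..n}. projection (2 * d) (E i)) \<and>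
    (\<forall>i\<in>{0..n}. E i \<in> carrier_mat (2 * d) (2 * d) \<and> adj J * E i * J = A i)"
proof -
  have "\<exists>E. projection (2 * d) E \<and> adj J * E * J = C"
    if "psd d C \<and> spectrum C \<subseteq> complex_of_real ` {0..1}" for C
    using that effect_compression_of_projection unfolding psd_def J_def by blast
  then obtain E where E: "\<forall>i\<in>{1..n}. projection (2 * d) (E i) \<and> adj J * E i * J = A i"
    using bchoice[of "{1..n}" "\<lambda>i E. projection (2 * d) E \<and> adj J * E * J = A i"] A by blast
  have J0: "adj J * 1\<^sub>m (2 * d) * J = A 0"
    using A0 right_mult_one_mat[OF adj_carrier_matI[OF dilation_embedding_carrier_mat]]
      dilation_embedding_isometry unfolding J_def by simp
  define E' where "E' = E(0 := 1\<^sub>m (2 * d))"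
  have "E' i \<in> carrier_mat (2 * d) (2 * d) \<and> adj J * E' i * J = A i" if "i \<in> {0..n}" for i
    using that E J0 unfolding E'_def projection_def hermitian_def by (cases "i = 0") auto
  moreover have "\<forall>i\<in>{1..n}. projection (2 * d) (E' i)"
    using E unfolding E'_def by auto
  ultimately show ?thesis
    by (intro exI[of _ E']) (auto simp: E'_def)
qed

lemma density_isometry_conj:
  assumes W: "density n W" and K: "K \<in> carrier_mat m n" and KK: "adj K * K = 1\<^sub>m n"
  shows "density m (K * W * adj K)"
proof -
  have Wc: "W \<in> carrier_mat n n" and adjW: "adj W = W" and trW: "mtrace W = 1"
    and W_psd: "\<And>v. v \<in> carrier_vec n \<Longrightarrow>
      cinner v (W *\<^sub>v v) \<in> \<real> \<and> 0 \<le> Re (cinner v (W *\<^sub>v v))"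
    using W unfolding density_def psd_def hermitian_def by auto
  have KW: "K * W \<in> carrier_mat m n" using K Wc by simp
  have "adj (K * W * adj K) = K * (adj W * adj K)"
    using adj_mult[OF KW adj_carrier_matI[OF K]] adj_mult[OF K Wc] by simp
  also have "\<dots> = K * W * adj K"
    using K Wc adjW by (simp add: assoc_mult_mat[of K m n W n "adj K" m])
  finally have "adj (K * W * adj K) = K * W * adj K" .
  moreover have "cinner v ((K * W * adj K) *\<^sub>v v) \<in> \<real> \<and>
      0 \<le> Re (cinner v ((K * W * adj K) *\<^sub>v v))"
    if v: "v \<in> carrier_vec m" for v
  proof -
    have Kv: "adj K *\<^sub>v v \<in> carrier_vec n"
      using mult_mat_vec_carrier[OF adj_carrier_matI[OF K] v] .
    have "cinner v ((K * W * adj K) *\<^sub>v v) = cinner (adj K *\<^sub>v v) (W *\<^sub>v (adj K *\<^sub>v v))"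
      using K Wc v cinner_mult_mat_vec[OF K v mult_mat_vec_carrier[OF Wc Kv]]
      by (simp add: assoc_mult_mat_vec[OF KW _ v] assoc_mult_mat_vec[OF K Wc Kv])
    then show ?thesis
      using W_psd[OF Kv] by simp
  qed
  moreover have "mtrace (K * W * adj K) = mtrace ((adj K * K) * W)"
    using K Wc KW
    by (simp add: mtrace_mult_comm[OF KW, of "adj K"] assoc_mult_mat[of "adj K" n m K n W n])
  ultimately show ?thesis
    unfolding density_def psd_def hermitian_def
    using K Wc KK trW W_psd by (simp add: mult_carrier_mat[of _ m n])
qed

lemma mtrace_isometry_conj:
  assumes K: "K \<in> carrier_mat m n" and W: "W \<in> carrier_mat n n" and M: "M \<in> carrier_mat m m"
  shows "mtrace (K * W * adj K * M) = mtrace (W * (adj K * M * K))"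
proof -
  have "mtrace (K * W * adj K * M) = mtrace (K * (W * (adj K * M)))"
    using assms by (simp add: assoc_mult_mat[of _ m n _ n _ m] assoc_mult_mat[of _ m n _ m _ m]
        assoc_mult_mat[of _ n n _ m _ m] mult_carrier_mat[of _ n n])
  also have "\<dots> = mtrace (W * (adj K * M) * K)"
    using assms by (intro mtrace_mult_comm[of _ m n]) (auto simp: mult_carrier_mat[of _ n m])
  finally show ?thesis
    using assms by (simp add: assoc_mult_mat[of _ n n _ m _ n] assoc_mult_mat[of _ n m _ m _ n]
        mult_carrier_mat[of _ n m])
qed

lemma kron_compression:
  assumes J: "J \<in> carrier_mat D d" and P: "P \<in> carrier_mat D D" and Q: "Q \<in> carrier_mat D D"
  shows "adj (kron J J) * kron P Q * kron J J = kron (adj J * P * J) (adj J * Q * J)"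
  using assms by (simp add: adj_kron kron_mult[of _ d D _ D _ d D _ D]
      kron_mult[of _ d D _ d _ d D _ d] mult_carrier_mat[of _ d D])

lemma lift_state_kron:
  assumes W: "density (d * d) W" and J: "J \<in> carrier_mat D d" and JJ: "adj J * J = 1\<^sub>m d"
  defines "W' \<equiv> kron J J * W * adj (kron J J)"
  shows "density (D * D) W'"
    and "P \<in> carrier_mat D D \<Longrightarrow> Q \<in> carrier_mat D D \<Longrightarrow>
      mtrace (W' * kron P Q) = mtrace (W * kron (adj J * P * J) (adj J * Q * J))"
proof -
  have K: "kron J J \<in> carrier_mat (D * D) (d * d)"
    using kron_carrier_mat[OF J J] .
  have "adj (kron J J) * kron J J = 1\<^sub>m (d * d)"
    unfolding adj_kron using J JJ by (simp add: kron_mult[of _ d D _ d _ d D _ d] kron_one)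
  then show "density (D * D) W'"
    unfolding W'_def by (rule density_isometry_conj[OF W K])
  have Wc: "W \<in> carrier_mat (d * d) (d * d)"
    using W unfolding density_def psd_def hermitian_def by simp
  assume P: "P \<in> carrier_mat D D" and Q: "Q \<in> carrier_mat D D"
  have "mtrace (W' * kron P Q) = mtrace (W * (adj (kron J J) * kron P Q * kron J J))"
    unfolding W'_def using P Q by (intro mtrace_isometry_conj[OF K Wc kron_carrier_mat])
  then show "mtrace (W' * kron P Q) = mtrace (W * kron (adj J * P * J) (adj J * Q * J))"
    using kron_compression[OF J P Q] by simp
qed

lemma projection_psd:
  assumes "projection d P"
  shows "psd d P"
proof -
  have Pc: "P \<in> carrier_mat d d" and adjP: "adj P = P" and PP: "P * P = P"
    using assms unfolding projection_def hermitian_def by auto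
  have "cinner v (P *\<^sub>v v) = of_real (\<Sum>i<d. (cmod ((P *\<^sub>v v) $ i))\<^sup>2)"
    if v: "v \<in> carrier_vec d" for v
  proof -
    have "cinner v (P *\<^sub>v v) = cinner v ((P * P) *\<^sub>v v)" unfolding PP ..
    also have "\<dots> = cinner (P *\<^sub>v v) (P *\<^sub>v v)"
      using Pc v adjP by (simp add: assoc_mult_mat_vec[OF Pc Pc v] cinner_mult_mat_vec[OF Pc v(1)])
    also have "\<dots> = of_real (\<Sum>i<d. (cmod ((P *\<^sub>v v) $ i))\<^sup>2)"
      by (rule cinner_self) (use Pc v in simp)
    finally show ?thesis .
  qed
  then show ?thesis
    using assms unfolding psd_def projection_def by (simp add: sum_nonneg)
qed

lemma projection_spectrum:
  assumes "projection d P"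
  shows "spectrum P \<subseteq> complex_of_real ` {0..1}"
proof
  fix k assume "k \<in> spectrum P"
  then obtain v where v: "v \<in> carrier_vec d" "v \<noteq> 0\<^sub>v d" and Pv: "P *\<^sub>v v = k \<cdot>\<^sub>v v"
    using assms unfolding spectrum_def eigenvalue_def eigenvector_def projection_def hermitian_def
    by auto
  have Pc: "P \<in> carrier_mat d d" and PP: "P * P = P"
    using assms unfolding projection_def hermitian_def by auto
  have "(k * k) \<cdot>\<^sub>v v = P *\<^sub>v (P *\<^sub>v v)"
    using Pc v by (simp add: Pv mult_mat_vec[OF Pc v(1)] smult_smult_assoc)
  also have "\<dots> = k \<cdot>\<^sub>v v"
    using assoc_mult_mat_vec[OF Pc Pc v(1)] PP Pv by simp
  finally have "(k * k) \<cdot>\<^sub>v v = k \<cdot>\<^sub>v v" .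
  moreover obtain i where "i < d" "v $ i \<noteq> 0"
    using v by (metis carrier_vecD eq_vecI index_zero_vec)
  ultimately have "k * k = k"
    using v by (metis index_smult_vec(1) carrier_vecD mult_cancel_right)
  then have "k = 0 \<or> k = 1"
    by (metis mult_cancel_right1 mult_zero_left)
  then show "k \<in> complex_of_real ` {0..1}"
    by (auto intro: image_eqI[of _ _ 0] image_eqI[of _ _ 1])
qed

section \<open>Bell correlations\<close>

lemma mtrace_density_kron_one:
  assumes "density (d * d) W"
  shows "mtrace (W * kron (1\<^sub>m d) (1\<^sub>m d)) = 1"
  using assms unfolding density_def psd_def hermitian_def
  by (simp add: kron_one right_mult_one_mat[of W "d * d" "d * d"])

lemma bell_subset_bell_plus: "bell n \<subseteq> bell_plus n"
proof
  fix p assume "p \<in> bell n"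
  then obtain d E F W where p: "p \<in> carrier_mat (n + 1) (n + 1)" and p00: "p $$ (0, 0) = 1"
    and E: "\<forall>i\<in>{1..n}. projection d (E i)" and F: "\<forall>j\<in>{1..n}. projection d (F j)"
    and W: "density (d * d) W"
    and pE: "\<forall>i\<in>{1..n}. complex_of_real (p $$ (i, 0)) = mtrace (W * kron (E i) (1\<^sub>m d))"
    and pF: "\<forall>j\<in>{1..n}. complex_of_real (p $$ (0, j)) = mtrace (W * kron (1\<^sub>m d) (F j))"
    and pEF: "\<forall>i\<in>{1..n}. \<forall>j\<in>{1..n}. complex_of_real (p $$ (i, j)) = mtrace (W * kron (E i) (F j))"
    unfolding bell_def by blast
  define A where "A = E(0 := 1\<^sub>m d)"
  define B where "B = F(0 := 1\<^sub>m d)"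
  have "\<forall>i\<in>{0..n}. \<forall>j\<in>{0..n}. complex_of_real (p $$ (i, j)) = mtrace (W * kron (A i) (B j))"
    using p00 pE pF pEF mtrace_density_kron_one[OF W] by (auto simp: A_def B_def)
  moreover have "\<forall>i\<in>{1..n}. psd d (A i) \<and> spectrum (A i) \<subseteq> complex_of_real ` {0..1}"
    using E projection_psd projection_spectrum unfolding A_def by fastforce
  moreover have "\<forall>j\<in>{1..n}. psd d (B j) \<and> spectrum (B j) \<subseteq> complex_of_real ` {0..1}"
    using F projection_psd projection_spectrum unfolding B_def by fastforce
  moreover have "A 0 = 1\<^sub>m d" "B 0 = 1\<^sub>m d"
    unfolding A_def B_def by simp_all
  ultimately show "p \<in> bell_plus n"
    unfolding bell_plus_def using p W
    by (intro CollectI conjI exI[of _ d] exI[of _ A] exI[of _ B] exI[of _ W]) auto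
qed

lemma bell_plus_subset_bell: "bell_plus n \<subseteq> bell n"
proof
  fix q assume "q \<in> bell_plus n"
  then obtain d A B W where q: "q \<in> carrier_mat (n + 1) (n + 1)"
    and A0: "A 0 = 1\<^sub>m d" and B0: "B 0 = 1\<^sub>m d"
    and A: "\<forall>i\<in>{1..n}. psd d (A i) \<and> spectrum (A i) \<subseteq> complex_of_real ` {0..1}"
    and B: "\<forall>j\<in>{1..n}. psd d (B j) \<and> spectrum (B j) \<subseteq> complex_of_real ` {0..1}"
    and W: "density (d * d) W"
    and qAB: "\<forall>i\<in>{0..n}. \<forall>j\<in>{0..n}. complex_of_real (q $$ (i, j)) = mtrace (W * kron (A i) (B j))"
    unfolding bell_plus_def by blast
  define J where "J = dilation_embedding d"
  obtain E where E0: "E 0 = 1\<^sub>m (2 * d)" and E: "\<forall>i\<in>{1..n}. projection (2 * d) (E i)"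
    and EA: "\<forall>i\<in>{0..n}. E i \<in> carrier_mat (2 * d) (2 * d) \<and> adj J * E i * J = A i"
    using effect_family_dilation[OF A0 A] unfolding J_def by blast
  obtain F where F0: "F 0 = 1\<^sub>m (2 * d)" and F: "\<forall>j\<in>{1..n}. projection (2 * d) (F j)"
    and FB: "\<forall>j\<in>{0..n}. F j \<in> carrier_mat (2 * d) (2 * d) \<and> adj J * F j * J = B j"
    using effect_family_dilation[OF B0 B] unfolding J_def by blast
  define W' where "W' = kron J J * W * adj (kron J J)"
  have J: "J \<in> carrier_mat (2 * d) d" "adj J * J = 1\<^sub>m d"
    unfolding J_def by (rule dilation_embedding_carrier_mat dilation_embedding_isometry)+
  have W': "density (2 * d * (2 * d)) W'"
    unfolding W'_def using W J by (rule lift_state_kron)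
  have qEF: "\<forall>i\<in>{0..n}. \<forall>j\<in>{0..n}. complex_of_real (q $$ (i, j)) = mtrace (W' * kron (E i) (F j))"
    using qAB EA FB lift_state_kron(2)[OF W J] unfolding W'_def by simp
  have "complex_of_real (q $$ (0, 0)) = 1"
    using qAB A0 B0 mtrace_density_kron_one[OF W] by simp
  then have "q $$ (0, 0) = 1" by simp
  with q W' qEF E F E0 F0 show "q \<in> bell n"
    unfolding bell_def by (intro CollectI conjI exI[of _ "2 * d"] exI[of _ E] exI[of _ F] exI[of _ W']) auto
qed

theorem theorem2:
  fixes n :: nat
  assumes "n \<ge> 1"
  shows "bell n = bell_plus n"
  using bell_subset_bell_plus bell_plus_subset_bell by blast

end
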